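(* Let $x\in[n]$ be $b$-above, $c=T[x]$ and $i=\mathrm{bwt}(x)$. For every $c$-run break $j>i+b+1$ and every $j'\in\{j-1,j\}$ with $\mathrm{BWT}_r[j']=c$, $$\big|\mathrm{lcs}\big(T[\mathrm{text}(j')-\mathrm{LCP}_r[j],\mathrm{text}(j')],\,T[1,x]\big)\big|\le\big|\mathrm{lcs}\big(T[1,x],\,T[\mathrm{text}(i+b)-\mathrm{LCP}_r[i+b+1],\mathrm{text}(i+b)]\big)\big|.$$
   Context: Let $T=T[1,n]\in\Sigma^n$, $n\ge2$, over $\Sigma=\{1,\dots,\sigma\}$, with $T[1]=\$$ the smallest character, occurring only at position 1, and every character of $\Sigma$ occurring in $T$. $T[i,j]=T[i]\cdots T[j]$ (empty if $i>j$). Let $\overleftarrow T=T[n]\cdots T[1]$; $\mathrm{SA}_r$ is the suffix array of $\overleftarrow T$; $\mathrm{LCP}_r[1]=0$ and for $i\ge2$, $\mathrm{LCP}_r[i]$ is the length of the longest common prefix of the suffixes of $\overleftarrow T$ starting at $\mathrm{SA}_r[i-1]$ and $\mathrm{SA}_r[i]$; $\mathrm{BWT}_r[i]=\overleftarrow T[\mathrm{SA}_r[i]-1]$ if $\mathrm{SA}_r[i]>1$, else $\overleftarrow T[n]$. $\mathrm{text}(i)=n-\mathrm{SA}_r[i]+1$, $\mathrm{bwt}(x)=\mathrm{SA}_r^{-1}[n+1-x]$. $\mathrm{lcs}(\alpha,\beta)$ is the longest common suffix of strings $\alpha,\beta$ and $|\cdot|$ denotes length. For $i\in[2,n]$, $c\in\Sigma$,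 $i$ is a $c$-run break if $\mathrm{BWT}_r[i-1]\ne\mathrm{BWT}_r[i]$ and $c\in\{\mathrm{BWT}_r[i-1],\mathrm{BWT}_r[i]\}$. With $i=\mathrm{bwt}(x)$, $x$ is $b$-above if $b\in[0,n-i-1]$ and $\mathrm{BWT}_r[i]=\dots=\mathrm{BWT}_r[i+b]\ne\mathrm{BWT}_r[i+b+1]$. *)

theory Defs
  imports Main "HOL-Library.List_Lexorder"
begin

(* Strings are nat lists; paper positions are 1-based: T[k] = T ! (k-1).
   The reversed text is rev T. *)

definition chr :: "nat list \<Rightarrow> nat \<Rightarrow> nat" where
  "chr S k = S ! (k - 1)"

(* T[i,j] (1-based, empty if i > j) *)
definition substr :: "nat list \<Rightarrow> nat \<Rightarrow> nat \<Rightarrow> nat list" where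
  "substr S i j = take (Suc j - i) (drop (i - 1) S)"

fun lcp :: "nat list \<Rightarrow> nat list \<Rightarrow> nat list" where
  "lcp (x # xs) (y # ys) = (if x = y then x # lcp xs ys else [])"
| "lcp _ _ = []"

definition lcs :: "nat list \<Rightarrow> nat list \<Rightarrow> nat list" where
  "lcs a b = rev (lcp (rev a) (rev b))"

definition rsuf :: "nat list \<Rightarrow> nat \<Rightarrow> nat list" where
  "rsuf T p = drop (p - 1) (rev T)"

(* suffix array SA_r of rev T (1-based index i, values in 1..n),
   lexicographic order (proper prefix smaller) *)
definition SA_r :: "nat list \<Rightarrow> nat \<Rightarrow> nat" where
  "SA_r T i = sort_key (rsuf T) [1..<Suc (length T)] ! (i - 1)"

definition SA_r_inv :: "nat list \<Rightarrow> nat \<Rightarrow> nat" where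
  "SA_r_inv T p = (THE i. i \<in> {1..length T} \<and> SA_r T i = p)"

definition LCP_r :: "nat list \<Rightarrow> nat \<Rightarrow> nat" where
  "LCP_r T i = (if i \<le> 1 then 0
      else length (lcp (rsuf T (SA_r T (i - 1))) (rsuf T (SA_r T i))))"

definition BWT_r :: "nat list \<Rightarrow> nat \<Rightarrow> nat" where
  "BWT_r T i = (if SA_r T i > 1 then chr (rev T) (SA_r T i - 1)
                else chr (rev T) (length T))"

definition textpos :: "nat list \<Rightarrow> nat \<Rightarrow> nat" where
  "textpos T i = length T - SA_r T i + 1"

definition bwt :: "nat list \<Rightarrow> nat \<Rightarrow> nat" where
  "bwt T x = SA_r_inv T (length T + 1 - x)"

definition run_break :: "nat list \<Rightarrow> nat \<Rightarrow> nat \<Rightarrow> bool" where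
  "run_break T c i \<longleftrightarrow> 2 \<le> i \<and> i \<le> length T \<and> BWT_r T (i - 1) \<noteq> BWT_r T i
      \<and> c \<in> {BWT_r T (i - 1), BWT_r T i}"

(* x is b-above; b \<in> [0, n-i-1] is written i + b + 1 \<le> n *)
definition b_above :: "nat list \<Rightarrow> nat \<Rightarrow> nat \<Rightarrow> bool" where
  "b_above T b x \<longleftrightarrow> (let i = bwt T x in
      i + b + 1 \<le> length T \<and> (\<forall>k\<in>{i..i+b}. BWT_r T k = BWT_r T i)
      \<and> BWT_r T (i + b) \<noteq> BWT_r T (i + b + 1))"

(* standing assumptions on the text: alphabet {1..sigma}, $ = 1 smallest,
   occurring only at position 1, every character occurs, n \<ge> 2 *)
definition valid_text :: "nat \<Rightarrow> nat list \<Rightarrow> bool" where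
  "valid_text \<sigma> T \<longleftrightarrow> length T \<ge> 2 \<and> set T = {1..\<sigma>} \<and> chr T 1 = 1
      \<and> (\<forall>k\<in>{2..length T}. chr T k \<noteq> 1)"

end

theory Submission
  imports Defs
begin

(* Reversal turns longest common suffixes of prefixes of T into longest common prefixes of
   suffixes of the reversed text: T[1,text(k)] reversed is the suffix s(k) listed at position
   k of SA_r. Since $ occurs only once, no such suffix is a prefix of another, so for k in
   {j-1, j} the substring of length LCP_r[j] + 1 ending at text(k) reverses to a prefix of
   s(k). For lexicographically sorted strings the common prefix of the two outer ones of
   i <= i+b < i+b+1 <= j' is bounded by that of every intermediate pair, in particular by
   lcp(s(i), s(i+b)) and by LCP_r[i+b+1], which gives the claim. *)

lemma lcp_commute: "lcp a b = lcp b a"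
  by (induction a b rule: lcp.induct) auto

lemma take_length_lcp_left: "take (length (lcp a b)) a = lcp a b"
  by (induction a b rule: lcp.induct) auto

lemma take_length_lcp_right: "take (length (lcp a b)) b = lcp a b"
  by (induction a b rule: lcp.induct) auto

lemma length_lcp_le_left: "length (lcp a b) \<le> length a"
  by (induction a b rule: lcp.induct) auto

lemma length_lcp_le_right: "length (lcp a b) \<le> length b"
  by (induction a b rule: lcp.induct) auto

lemma length_lcp_take: "length (lcp a (take m b)) = min (length (lcp a b)) m"
proof (induction a b arbitrary: m rule: lcp.induct)
  case (1 x xs y ys)
  then show ?case by (cases m) auto
qed simp_all

lemma length_lcp_sorted:
  fixes a b c :: "nat list"
  assumes "a \<le> b" and "b \<le> c"
  shows "length (lcp a c) \<le> min (length (lcp a b)) (length (lcp b c))"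
  using assms
proof (induction a arbitrary: b c)
  case Nil
  then show ?case by simp
next
  case (Cons x a)
  show ?case
  proof (cases "c = [] \<or> hd c \<noteq> x")
    case True
    then show ?thesis by (cases c) auto
  next
    case False
    then obtain c' where c: "c = x # c'" by (cases c) auto
    with Cons.prems obtain b' where "b = x # b'" "a \<le> b'" "b' \<le> c'"
      by (cases b) (auto simp: less_eq_list_code)
    then show ?thesis using Cons.IH[of b' c'] c by simp
  qed
qed

lemma length_lcp_sorted_chain:
  fixes a b c d :: "nat list"
  assumes "a \<le> b" and "b \<le> c" and "c \<le> d"
  shows "length (lcp a d) \<le> min (length (lcp a b)) (length (lcp b c))"
proof -
  have "length (lcp a d) \<le> min (length (lcp a b)) (length (lcp b d))"
    using length_lcp_sorted[of a b d] assms by auto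
  moreover have "length (lcp b d) \<le> length (lcp b c)"
    using length_lcp_sorted[of b c d] assms by auto
  ultimately show ?thesis by simp
qed

definition SA_list :: "nat list \<Rightarrow> nat list" where
  "SA_list T = sort_key (rsuf T) [1..<Suc (length T)]"

definition sorted_suffix :: "nat list \<Rightarrow> nat \<Rightarrow> nat list" where
  "sorted_suffix T k = rsuf T (SA_r T k)"

lemma SA_list_props:
  "length (SA_list T) = length T" "distinct (SA_list T)" "set (SA_list T) = {1..length T}"
  "sorted (map (rsuf T) (SA_list T))"
  unfolding SA_list_def
  by (simp_all del: upt_Suc add: sorted_sort_key atLeastLessThanSuc_atLeastAtMost)

lemma SA_r_eq_nth: "SA_r T k = SA_list T ! (k - 1)"
  unfolding SA_r_def SA_list_def by simp

lemma SA_r_in_range: "k \<in> {1..length T} \<Longrightarrow> SA_r T k \<in> {1..length T}"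
  using SA_list_props(1,3)[of T] nth_mem[of "k - 1" "SA_list T"] by (auto simp: SA_r_eq_nth)

lemma SA_r_inj:
  assumes "k \<in> {1..length T}" and "l \<in> {1..length T}" and "SA_r T k = SA_r T l"
  shows "k = l"
proof -
  have "k - 1 = l - 1"
    using assms SA_list_props(1,2)[of T] nth_eq_iff_index_eq by (fastforce simp: SA_r_eq_nth)
  then show ?thesis using assms by auto
qed

lemma sorted_suffix_mono:
  assumes "1 \<le> k" and "k \<le> l" and "l \<le> length T"
  shows "sorted_suffix T k \<le> sorted_suffix T l"
proof -
  have "map (rsuf T) (SA_list T) ! (k - 1) \<le> map (rsuf T) (SA_list T) ! (l - 1)"
    using SA_list_props(1,4)[of T] assms by (intro sorted_nth_mono) auto
  then show ?thesis
    using assms SA_list_props(1)[of T] by (simp add: SA_r_eq_nth sorted_suffix_def)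
qed

lemma LCP_r_eq_lcp:
  "2 \<le> j \<Longrightarrow> LCP_r T j = length (lcp (sorted_suffix T (j - 1)) (sorted_suffix T j))"
  unfolding LCP_r_def sorted_suffix_def by simp

lemma bwt_in_range:
  assumes "x \<in> {1..length T}"
  shows "bwt T x \<in> {1..length T}" and "textpos T (bwt T x) = x"
proof -
  let ?p = "length T + 1 - x"
  have "?p \<in> set (SA_list T)"
    using assms SA_list_props(3)[of T] by auto
  then obtain k where k: "k < length T" "SA_list T ! k = ?p"
    using SA_list_props(1)[of T] by (auto simp: in_set_conv_nth)
  have k_spec: "Suc k \<in> {1..length T} \<and> SA_r T (Suc k) = ?p"
    using k by (simp add: SA_r_eq_nth)
  have "bwt T x = Suc k"
    unfolding bwt_def SA_r_inv_def
    using k_spec SA_r_inj[of _ T "Suc k"] by (intro the_equality) auto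
  then show "bwt T x \<in> {1..length T}" and "textpos T (bwt T x) = x"
    using k_spec assms by (auto simp: textpos_def)
qed

lemma rev_take_textpos:
  assumes "k \<in> {1..length T}"
  shows "rev (take (textpos T k) T) = sorted_suffix T k"
proof -
  have "length T - textpos T k = SA_r T k - 1"
    using SA_r_in_range[OF assms] by (auto simp: textpos_def)
  then show ?thesis by (simp add: rev_take rsuf_def sorted_suffix_def)
qed

lemma length_sorted_suffix: "k \<in> {1..length T} \<Longrightarrow> length (sorted_suffix T k) = textpos T k"
  using SA_r_in_range[of k T] by (auto simp: sorted_suffix_def rsuf_def textpos_def)

lemma rev_substr_textpos:
  assumes k: "k \<in> {1..length T}" and L: "L < textpos T k"
  shows "rev (substr T (textpos T k - L) (textpos T k)) = take (L + 1) (sorted_suffix T k)"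
proof -
  let ?t = "textpos T k"
  have "?t \<le> length T" using SA_r_in_range[OF k] by (auto simp: textpos_def)
  have "rev (substr T (?t - L) ?t) = rev (drop (?t - (L + 1)) (take ?t T))"
    using L by (simp add: drop_take substr_def Suc_diff_le)
  also have "\<dots> = take (L + 1) (rev (take ?t T))"
    using \<open>?t \<le> length T\<close> L by (simp add: rev_drop)
  also have "\<dots> = take (L + 1) (sorted_suffix T k)"
    using rev_take_textpos[OF k] by simp
  finally show ?thesis .
qed

lemma rev_substr_prefix:
  "x \<in> {1..length T} \<Longrightarrow> rev (substr T 1 x) = sorted_suffix T (bwt T x)"
  using rev_take_textpos[OF bwt_in_range(1)] bwt_in_range(2) by (simp add: substr_def)

lemma last_rsuf:
  assumes "p \<in> {1..length T}"
  shows "rsuf T p ! (length T - p) = T ! 0"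
  using assms by (auto simp: rsuf_def nth_drop rev_nth)

lemma length_lcp_rsuf_less:
  assumes T: "valid_text \<sigma> T" and p: "p \<in> {1..length T}" and q: "q \<in> {1..length T}"
    and "p \<noteq> q"
  shows "length (lcp (rsuf T p) (rsuf T q)) < length (rsuf T p)"
proof (rule ccontr)
  let ?a = "rsuf T p" and ?b = "rsuf T q"
  assume "\<not> ?thesis"
  then have full: "length (lcp ?a ?b) = length ?a"
    using length_lcp_le_left[of ?a ?b] by simp
  then have "length ?a \<le> length ?b"
    using length_lcp_le_right[of ?a ?b] by simp
  with \<open>p \<noteq> q\<close> have "q < p" using p q by (auto simp: rsuf_def)
  have "?a = take (length ?a) ?b"
    using full take_length_lcp_left[of ?a ?b] take_length_lcp_right[of ?a ?b] by simp
  moreover have "length T - p < length ?a"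
    using p by (auto simp: rsuf_def)
  ultimately have "?b ! (length T - p) = T ! 0"
    using last_rsuf[OF p] by (metis nth_take)
  moreover have "?b ! (length T - p) = T ! (p - q)"
    using p q \<open>q < p\<close> by (simp add: rsuf_def rev_nth nth_drop)
  moreover have "T ! (p - q) \<noteq> T ! 0"
  proof -
    have "p - q + 1 \<in> {2..length T}"
      using p q \<open>q < p\<close> by auto
    then have "chr T (p - q + 1) \<noteq> chr T 1"
      using T unfolding valid_text_def by auto
    then show ?thesis by (simp add: chr_def)
  qed
  ultimately show False by simp
qed

lemma LCP_r_less_textpos:
  assumes "valid_text \<sigma> T" and "2 \<le> j" and "j \<le> length T" and "k \<in> {j - 1, j}"
  shows "LCP_r T j < textpos T k"
proof -
  define l where "l = (if k = j then j - 1 else j)"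
  have kl: "{k, l} = {j - 1, j}" and "l \<noteq> k"
    using assms(2,4) by (auto simp: l_def)
  have range: "k \<in> {1..length T}" "l \<in> {1..length T}"
    using assms(2,3,4) by (auto simp: l_def)
  have "SA_r T k \<noteq> SA_r T l"
    using SA_r_inj[OF range] \<open>l \<noteq> k\<close> by blast
  then have "length (lcp (sorted_suffix T k) (sorted_suffix T l)) < textpos T k"
    using length_lcp_rsuf_less[OF assms(1) SA_r_in_range[OF range(1)] SA_r_in_range[OF range(2)]]
      length_sorted_suffix[OF range(1)] by (simp add: sorted_suffix_def)
  moreover have "LCP_r T j = length (lcp (sorted_suffix T k) (sorted_suffix T l))"
    using assms(2,4) LCP_r_eq_lcp[OF assms(2)] lcp_commute by (auto simp: l_def)
  ultimately show ?thesis by simp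
qed

lemma length_lcs_commute: "length (lcs u v) = length (lcs v u)"
  unfolding lcs_def by (simp add: lcp_commute)

lemma length_lcs_LCP_r_substr:
  assumes T: "valid_text \<sigma> T" and x: "x \<in> {1..length T}"
    and j: "2 \<le> j" "j \<le> length T" and k: "k \<in> {j - 1, j}"
  shows "length (lcs (substr T (textpos T k - LCP_r T j) (textpos T k)) (substr T 1 x))
    = min (length (lcp (sorted_suffix T (bwt T x)) (sorted_suffix T k))) (LCP_r T j + 1)"
proof -
  have "k \<in> {1..length T}"
    using j k by auto
  then have "rev (substr T (textpos T k - LCP_r T j) (textpos T k))
      = take (LCP_r T j + 1) (sorted_suffix T k)"
    using rev_substr_textpos LCP_r_less_textpos[OF T j k] by blast
  then show ?thesis
    unfolding lcs_def length_rev rev_rev_ident rev_substr_prefix[OF x]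
    by (simp add: lcp_commute length_lcp_take)
qed

theorem mainTheorem6:
  fixes \<sigma> :: nat and T :: "nat list" and x b j j' :: nat
  assumes "valid_text \<sigma> T"
    and "x \<in> {1..length T}"
    and "b_above T b x"
    and "run_break T (chr T x) j"
    and "j > bwt T x + b + 1"
    and "j' \<in> {j - 1, j}"
    and "BWT_r T j' = chr T x"
  shows "length (lcs (substr T (textpos T j' - LCP_r T j) (textpos T j')) (substr T 1 x))
         \<le> length (lcs (substr T 1 x)
              (substr T (textpos T (bwt T x + b) - LCP_r T (bwt T x + b + 1))
                        (textpos T (bwt T x + b))))"
proof -
  define i where "i = bwt T x"
  let ?s = "sorted_suffix T"
  have "1 \<le> i" using bwt_in_range(1)[OF assms(2)] by (simp add: i_def)
  have "i + b + 1 \<le> length T"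
    using assms(3) by (simp add: b_above_def i_def Let_def)
  have j: "2 \<le> j" "j \<le> length T"
    using assms(4) by (simp_all add: run_break_def)
  have "i + b + 1 \<le> j'" "j' \<le> length T"
    using assms(5,6) j by (auto simp: i_def)
  have "length (lcs (substr T (textpos T j' - LCP_r T j) (textpos T j')) (substr T 1 x))
      = min (length (lcp (?s i) (?s j'))) (LCP_r T j + 1)"
    using length_lcs_LCP_r_substr[OF assms(1,2) j assms(6)] by (simp add: i_def)
  also have "\<dots> \<le> length (lcp (?s i) (?s j'))"
    by simp
  also have "\<dots> \<le> min (length (lcp (?s i) (?s (i + b)))) (LCP_r T (i + b + 1) + 1)"
    using length_lcp_sorted_chain[of "?s i" "?s (i + b)" "?s (i + b + 1)" "?s j'"]
      sorted_suffix_mono LCP_r_eq_lcp[of "i + b + 1"]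
      \<open>1 \<le> i\<close> \<open>i + b + 1 \<le> j'\<close> \<open>j' \<le> length T\<close>
    by simp
  also have "\<dots> = length (lcs (substr T 1 x)
      (substr T (textpos T (i + b) - LCP_r T (i + b + 1)) (textpos T (i + b))))"
    using length_lcs_LCP_r_substr[OF assms(1,2), of "i + b + 1" "i + b"] \<open>1 \<le> i\<close>
      \<open>i + b + 1 \<le> length T\<close> length_lcs_commute by (simp add: i_def)
  finally show ?thesis
    by (simp add: i_def)
qed

end
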